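(* Let $G$ be an edge-ordered graph with average degree $d$, and suppose there is $0<\varepsilon<1$ such that every set of at most $\varepsilon d$ vertices of $G$ induces at most $(1/2-\varepsilon)d$ edges. Then $G$ has a monotone path of length $\varepsilon d$.
   Context: An edge-ordered graph is a graph together with a total order on its edge set. A path is monotone if its consecutive edges form a monotone sequence in this order; its length is the number of edges. *)

theory Defs
  imports Complex_Main
begin

definition simple_graph :: "'a set \<Rightarrow> 'a set set \<Rightarrow> bool" where
  "simple_graph V E \<longleftrightarrow> finite V \<and> (\<forall>e\<in>E. e \<subseteq> V \<and> card e = 2)"

definition edge_ordered_graph :: "'a set \<Rightarrow> 'a set set \<Rightarrow> ('a set \<times> 'a set) set \<Rightarrow> bool" where
  "edge_ordered_graph V E R \<longleftrightarrow> simple_graph V E \<and> strict_linear_order_on E R"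

definition average_degree :: "'a set \<Rightarrow> 'a set set \<Rightarrow> real" where
  "average_degree V E = 2 * real (card E) / real (card V)"

definition induced_edges :: "'a set set \<Rightarrow> 'a set \<Rightarrow> 'a set set" where
  "induced_edges E S = {e \<in> E. e \<subseteq> S}"

definition path_edges :: "'a list \<Rightarrow> 'a set list" where
  "path_edges xs = map (\<lambda>i. {xs ! i, xs ! (Suc i)}) [0..<length xs - 1]"

definition is_path :: "'a set \<Rightarrow> 'a set set \<Rightarrow> 'a list \<Rightarrow> bool" where
  "is_path V E xs \<longleftrightarrow> xs \<noteq> [] \<and> distinct xs \<and> set xs \<subseteq> V \<and> set (path_edges xs) \<subseteq> E"

definition path_length :: "'a list \<Rightarrow> nat" where
  "path_length xs = length xs - 1"

definition monotone_path :: "'a set \<Rightarrow> 'a set set \<Rightarrow> ('a set \<times> 'a set) set \<Rightarrow> 'a list \<Rightarrow> bool" where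
  "monotone_path V E R xs \<longleftrightarrow> is_path V E xs \<and>
     (sorted_wrt (\<lambda>e f. (e, f) \<in> R) (path_edges xs) \<or> sorted_wrt (\<lambda>e f. (f, e) \<in> R) (path_edges xs))"

end

(* Process the edges in increasing order while every vertex x carries an increasing path P(x)
   ending at x, initially the trivial one. When the edge uv arrives and neither endpoint lies on
   the other's path, set simultaneously P(u) := P(v) u and P(v) := P(u) v; otherwise uv is spanned
   by the vertex set of one of the paths. With e(P) the number of processed edges spanned by the
   vertices of P and l(P) its length, every step raises the excess sum_x 2 e(P(x)) - l(P(x)) by at
   least 2, so in the end it is at least 2|E| = |V| d. If all paths were shorter than eps d, then
   P(x) without x would span at most (1/2 - eps) d edges and x would add at most l(P(x)) more,
   making every term of the excess smaller than (1 - eps) d: a contradiction. *)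

theory Submission
  imports Defs
begin

lemma finite_total_trans_has_greatest:
  assumes "finite A" "A \<noteq> {}" "trans R" "total_on A R"
  shows "\<exists>m\<in>A. \<forall>a\<in>A - {m}. (a, m) \<in> R"
  using assms(1,2,4)
proof (induction A rule: finite_ne_induct)
  case (singleton x)
  then show ?case by simp
next
  case (insert x A)
  obtain m where m: "m \<in> A" "\<forall>a\<in>A - {m}. (a, m) \<in> R"
    using insert.IH insert.prems total_on_subset by blast
  show ?case
  proof (cases "(x, m) \<in> R")
    case True
    then show ?thesis using m by auto
  next
    case False
    moreover have "x \<noteq> m" using insert.hyps m(1) by blast
    ultimately have "(m, x) \<in> R"
      using insert.prems m(1) unfolding total_on_def by blast
    then show ?thesis using m assms(3) by (auto dest: transD)
  qed
qed

lemma sum_remove2: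
  assumes "finite V" "u \<in> V" "v \<in> V" "u \<noteq> v"
  shows "sum f V = f u + f v + sum f (V - {u, v})"
proof -
  have "sum f V = f u + sum f (V - {u})" using assms by (simp add: sum.remove)
  also have "sum f (V - {u}) = f v + sum f (V - {u} - {v})" using assms by (simp add: sum.remove)
  finally show ?thesis by (simp add: Diff_insert2[symmetric] insert_commute add.assoc)
qed

lemma sum_le_sum_swap:
  fixes f g :: "'a \<Rightarrow> real"
  assumes "finite V" "u \<in> V" "v \<in> V" "u \<noteq> v"
    and "\<forall>x\<in>V - {u, v}. f x \<le> g x" "f u + c \<le> g v" "f v + c \<le> g u"
  shows "sum f V + 2 * c \<le> sum g V"
  using sum_remove2[OF assms(1-4), of f] sum_remove2[OF assms(1-4), of g]
    sum_mono[of "V - {u, v}" f g] assms(5-7) by simp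

lemma path_edges_snoc:
  assumes "xs \<noteq> []"
  shows "path_edges (xs @ [y]) = path_edges xs @ [{last xs, y}]"
proof -
  obtain n where n: "length xs = Suc n" using assms by (cases xs) auto
  then have "last xs = xs ! n" using assms by (simp add: last_conv_nth)
  then show ?thesis using n by (simp add: path_edges_def nth_append)
qed

lemma path_length_snoc: "xs \<noteq> [] \<Longrightarrow> path_length (xs @ [y]) = path_length xs + 1"
  by (simp add: path_length_def)

lemma card_induced_edges_mono:
  "D \<subseteq> D' \<Longrightarrow> finite D' \<Longrightarrow> S \<subseteq> S' \<Longrightarrow> card (induced_edges D S) \<le> card (induced_edges D' S')"
  by (intro card_mono) (auto simp: induced_edges_def)

lemma Suc_card_induced_edges_le:
  assumes "e \<notin> D" "finite D" "e \<subseteq> S'" "S \<subseteq> S'"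
  shows "Suc (card (induced_edges D S)) \<le> card (induced_edges (insert e D) S')"
proof -
  have "insert e (induced_edges D S) \<subseteq> induced_edges (insert e D) S'"
    using assms by (auto simp: induced_edges_def)
  then have "card (insert e (induced_edges D S)) \<le> card (induced_edges (insert e D) S')"
    using assms(2) by (intro card_mono) (auto simp: induced_edges_def)
  then show ?thesis using assms(1,2) by (simp add: induced_edges_def)
qed

lemma card_induced_edges_le_remove:
  assumes "\<forall>e\<in>E. card e = 2" "finite E" "finite S" "x \<in> S"
  shows "card (induced_edges E S) \<le> card (induced_edges E (S - {x})) + card (S - {x})"
proof -
  have "induced_edges E S \<subseteq> induced_edges E (S - {x}) \<union> (\<lambda>y. {x, y}) ` (S - {x})"
  proof
    fix e assume e: "e \<in> induced_edges E S"
    then obtain a b where ab: "e = {a, b}" "a \<noteq> b"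
      using assms(1) by (auto simp: induced_edges_def card_2_iff)
    then show "e \<in> induced_edges E (S - {x}) \<union> (\<lambda>y. {x, y}) ` (S - {x})"
      using e by (cases "x \<in> e") (auto simp: induced_edges_def insert_commute)
  qed
  moreover have "finite (induced_edges E (S - {x}))"
    using assms(2) by (simp add: induced_edges_def)
  ultimately have "card (induced_edges E S)
      \<le> card (induced_edges E (S - {x})) + card ((\<lambda>y. {x, y}) ` (S - {x}))"
    using assms(3) by (meson card_Un_le card_mono finite_Diff finite_UnI finite_imageI order_trans)
  also have "card ((\<lambda>y. {x, y}) ` (S - {x})) \<le> card (S - {x})"
    by (rule card_image_le) (use assms(3) in simp)
  finally show ?thesis by simp
qed

definition increasing_path_to ::
    "'a set \<Rightarrow> 'a set set \<Rightarrow> ('a set \<times> 'a set) set \<Rightarrow> 'a list \<Rightarrow> 'a \<Rightarrow> bool" where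
  "increasing_path_to V D R xs x \<longleftrightarrow>
     is_path V D xs \<and> last xs = x \<and> sorted_wrt (\<lambda>e f. (e, f) \<in> R) (path_edges xs)"

definition path_excess :: "'a set set \<Rightarrow> 'a list \<Rightarrow> real" where
  "path_excess D xs = 2 * real (card (induced_edges D (set xs))) - real (path_length xs)"

definition path_system ::
    "'a set \<Rightarrow> 'a set set \<Rightarrow> ('a set \<times> 'a set) set \<Rightarrow> ('a \<Rightarrow> 'a list) \<Rightarrow> bool" where
  "path_system V D R \<sigma> \<longleftrightarrow>
     (\<forall>x\<in>V. increasing_path_to V D R (\<sigma> x) x) \<and> 2 * real (card D) \<le> (\<Sum>x\<in>V. path_excess D (\<sigma> x))"

lemma increasing_path_to_mono:
  "increasing_path_to V D R xs x \<Longrightarrow> D \<subseteq> D' \<Longrightarrow> increasing_path_to V D' R xs x"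
  by (auto simp: increasing_path_to_def is_path_def)

lemma increasing_path_to_endpoint:
  "increasing_path_to V D R xs x \<Longrightarrow> xs \<noteq> [] \<and> x \<in> set xs"
  by (auto simp: increasing_path_to_def is_path_def)

lemma increasing_path_to_snoc:
  assumes "increasing_path_to V D R xs x" "y \<notin> set xs" "y \<in> V" "\<forall>f\<in>D. (f, {x, y}) \<in> R"
  shows "increasing_path_to V (insert {x, y} D) R (xs @ [y]) y"
proof -
  have "path_edges (xs @ [y]) = path_edges xs @ [{x, y}]"
    using assms(1) path_edges_snoc by (auto simp: increasing_path_to_def is_path_def)
  then show ?thesis
    using assms by (auto simp: increasing_path_to_def is_path_def sorted_wrt_append)
qed

lemma path_excess_mono:
  "D \<subseteq> D' \<Longrightarrow> finite D' \<Longrightarrow> path_excess D xs \<le> path_excess D' xs"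
  using card_induced_edges_mono[of D D' "set xs" "set xs"] by (simp add: path_excess_def)

lemma path_excess_insert_covered:
  assumes "e \<notin> D" "finite D" "e \<subseteq> set xs"
  shows "path_excess D xs + 2 \<le> path_excess (insert e D) xs"
  using Suc_card_induced_edges_le[OF assms, of "set xs"] by (simp add: path_excess_def)

lemma path_excess_snoc:
  assumes "e \<notin> D" "finite D" "xs \<noteq> []" "e \<subseteq> set (xs @ [y])"
  shows "path_excess D xs + 1 \<le> path_excess (insert e D) (xs @ [y])"
proof -
  have "Suc (card (induced_edges D (set xs))) \<le> card (induced_edges (insert e D) (set (xs @ [y])))"
    using assms by (intro Suc_card_induced_edges_le) auto
  then show ?thesis using path_length_snoc[OF assms(3)] by (simp add: path_excess_def)
qed

lemma path_system_empty: "path_system V {} R (\<lambda>x. [x])"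
  by (simp add: path_system_def increasing_path_to_def is_path_def path_edges_def
      path_excess_def path_length_def induced_edges_def)

lemma path_system_insert_joining:
  assumes "path_system V D R \<sigma>" "finite V" "finite D"
    and "u \<in> V" "v \<in> V" "u \<noteq> v" "{u, v} \<notin> D" "\<forall>f\<in>D. (f, {u, v}) \<in> R"
    and "v \<notin> set (\<sigma> u)" "u \<notin> set (\<sigma> v)"
  shows "path_system V (insert {u, v} D) R (\<sigma>(u := \<sigma> v @ [u], v := \<sigma> u @ [v]))"
    (is "path_system V ?D' R ?\<sigma>'")
proof -
  have paths: "increasing_path_to V D R (\<sigma> x) x" if "x \<in> V" for x
    using assms(1) that by (simp add: path_system_def)
  have "increasing_path_to V ?D' R (?\<sigma>' x) x" if "x \<in> V" for x
  proof -
    have "increasing_path_to V ?D' R (\<sigma> v @ [u]) u"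
      using increasing_path_to_snoc[OF paths[OF assms(5)] assms(10,4)] assms(8)
      by (simp add: insert_commute)
    moreover have "increasing_path_to V ?D' R (\<sigma> u @ [v]) v"
      using increasing_path_to_snoc[OF paths[OF assms(4)] assms(9,5,8)] .
    moreover have "increasing_path_to V ?D' R (\<sigma> x) x"
      using increasing_path_to_mono[OF paths[OF that]] by blast
    ultimately show ?thesis using assms(6) by auto
  qed
  moreover have "(\<Sum>x\<in>V. path_excess D (\<sigma> x)) + 2 * 1 \<le> (\<Sum>x\<in>V. path_excess ?D' (?\<sigma>' x))"
  proof (rule sum_le_sum_swap[OF assms(2,4,5,6)])
    show "\<forall>x\<in>V - {u, v}. path_excess D (\<sigma> x) \<le> path_excess ?D' (?\<sigma>' x)"
      using assms(3) by (auto intro: path_excess_mono)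
    have "path_excess D (\<sigma> u) + 1 \<le> path_excess ?D' (\<sigma> u @ [v])"
      using increasing_path_to_endpoint[OF paths[OF assms(4)]] assms(3,7)
      by (intro path_excess_snoc) auto
    then show "path_excess D (\<sigma> u) + 1 \<le> path_excess ?D' (?\<sigma>' v)" by simp
    have "path_excess D (\<sigma> v) + 1 \<le> path_excess ?D' (\<sigma> v @ [u])"
      using increasing_path_to_endpoint[OF paths[OF assms(5)]] assms(3,7)
      by (intro path_excess_snoc) auto
    then show "path_excess D (\<sigma> v) + 1 \<le> path_excess ?D' (?\<sigma>' u)" using assms(6) by simp
  qed
  ultimately show ?thesis
    using assms(1,3,7) by (simp add: path_system_def)
qed

lemma path_system_insert_covered:
  assumes "path_system V D R \<sigma>" "finite V" "finite D" "e \<notin> D" "w \<in> V" "e \<subseteq> set (\<sigma> w)"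
  shows "path_system V (insert e D) R \<sigma>"
proof -
  have "(\<Sum>x\<in>V - {w}. path_excess D (\<sigma> x)) \<le> (\<Sum>x\<in>V - {w}. path_excess (insert e D) (\<sigma> x))"
    using assms(3) by (intro sum_mono path_excess_mono) auto
  then have "(\<Sum>x\<in>V. path_excess D (\<sigma> x)) + 2 \<le> (\<Sum>x\<in>V. path_excess (insert e D) (\<sigma> x))"
    using path_excess_insert_covered[OF assms(4,3,6)] assms(2,5) by (simp add: sum.remove)
  then show ?thesis
    using assms(1,3,4) by (auto simp: path_system_def intro: increasing_path_to_mono)
qed

lemma path_system_insert_greatest:
  assumes "path_system V D R \<sigma>" "finite V" "finite D"
    and "e \<notin> D" "e \<subseteq> V" "card e = 2" "\<forall>f\<in>D. (f, e) \<in> R"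
  shows "\<exists>\<sigma>'. path_system V (insert e D) R \<sigma>'"
proof -
  obtain u v where e: "e = {u, v}" "u \<noteq> v" using assms(6) by (auto simp: card_2_iff)
  have endpoints: "x \<in> set (\<sigma> x)" if "x \<in> V" for x
    using assms(1) that by (auto simp: path_system_def dest: increasing_path_to_endpoint)
  show ?thesis
  proof (cases "v \<in> set (\<sigma> u) \<or> u \<in> set (\<sigma> v)")
    case True
    then consider "e \<subseteq> set (\<sigma> u)" | "e \<subseteq> set (\<sigma> v)"
      using endpoints assms(5) e(1) by auto
    then show ?thesis
      using path_system_insert_covered[OF assms(1-4)] assms(5) e(1) by cases auto
  next
    case False
    have "path_system V (insert {u, v} D) R (\<sigma>(u := \<sigma> v @ [u], v := \<sigma> u @ [v]))"
      using False assms(4,5,7) e by (intro path_system_insert_joining[OF assms(1-3)]) auto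
    then show ?thesis using e(1) by blast
  qed
qed

lemma path_system_exists:
  assumes "finite V" "finite E" "\<forall>e\<in>E. e \<subseteq> V \<and> card e = 2" "trans R" "total_on E R"
  shows "\<exists>\<sigma>. path_system V E R \<sigma>"
  using assms(2)
proof (induction rule: finite_remove_induct)
  case empty
  show ?case using path_system_empty by blast
next
  case (remove A)
  obtain e where e: "e \<in> A" "\<forall>f\<in>A - {e}. (f, e) \<in> R"
    using finite_total_trans_has_greatest[OF remove.hyps(1,2) assms(4)]
      total_on_subset[OF assms(5) remove.hyps(3)] by blast
  obtain \<sigma> where "path_system V (A - {e}) R \<sigma>" using remove.IH[OF e(1)] by blast
  moreover have "e \<subseteq> V" "card e = 2" using assms(3) remove.hyps(3) e(1) by auto
  ultimately have "\<exists>\<sigma>'. path_system V (insert e (A - {e})) R \<sigma>'"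
    using e(2) remove.hyps(1) assms(1) by (intro path_system_insert_greatest) auto
  then show ?case using e(1) by (simp add: insert_absorb)
qed

lemma path_excess_less:
  fixes \<epsilon> d :: real
  assumes "\<forall>e\<in>E. card e = 2" "finite E" "xs \<noteq> []" "distinct xs" "set xs \<subseteq> V"
    and "real (path_length xs) < \<epsilon> * d"
    and "\<forall>S. S \<subseteq> V \<and> real (card S) \<le> \<epsilon> * d \<longrightarrow>
           real (card (induced_edges E S)) \<le> (1/2 - \<epsilon>) * d"
  shows "path_excess E xs < (1 - \<epsilon>) * d"
proof -
  define x where "x = hd xs"
  have x: "x \<in> set xs" using assms(3) by (simp add: x_def)
  have length: "card (set xs - {x}) = path_length xs"
    using x assms(4) by (simp add: distinct_card path_length_def)
  then have "set xs - {x} \<subseteq> V \<and> real (card (set xs - {x})) \<le> \<epsilon> * d"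
    using assms(5,6) by auto
  then have "real (card (induced_edges E (set xs - {x}))) \<le> (1/2 - \<epsilon>) * d"
    using assms(7) by blast
  moreover have "card (induced_edges E (set xs)) \<le> card (induced_edges E (set xs - {x})) + path_length xs"
    using card_induced_edges_le_remove[OF assms(1,2) _ x] length by simp
  ultimately show ?thesis using assms(6) by (simp add: path_excess_def algebra_simps)
qed

lemma path_system_has_long_path:
  fixes \<epsilon> d :: real
  assumes "path_system V E R \<sigma>" "finite V" "V \<noteq> {}" "\<forall>e\<in>E. card e = 2" "finite E"
    and "d = average_degree V E" "0 < \<epsilon>"
    and "\<forall>S. S \<subseteq> V \<and> real (card S) \<le> \<epsilon> * d \<longrightarrow>
           real (card (induced_edges E S)) \<le> (1/2 - \<epsilon>) * d"
  shows "\<exists>x\<in>V. \<epsilon> * d \<le> real (path_length (\<sigma> x))"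
proof (rule ccontr)
  assume "\<not> ?thesis"
  then have "path_excess E (\<sigma> x) < (1 - \<epsilon>) * d" if "x \<in> V" for x
    using assms(1,4,5,8) that
    by (intro path_excess_less) (auto simp: path_system_def increasing_path_to_def is_path_def)
  then have "(\<Sum>x\<in>V. path_excess E (\<sigma> x)) < (\<Sum>x\<in>V. (1 - \<epsilon>) * d)"
    by (rule sum_strict_mono[OF assms(2,3)])
  also have "\<dots> = real (card V) * d - \<epsilon> * (real (card V) * d)"
    by (simp add: algebra_simps)
  finally have "(\<Sum>x\<in>V. path_excess E (\<sigma> x)) < real (card V) * d - \<epsilon> * (real (card V) * d)" .
  moreover have "real (card V) * d = 2 * real (card E)"
    using assms(2,3,6) by (simp add: average_degree_def)
  moreover have "2 * real (card E) \<le> (\<Sum>x\<in>V. path_excess E (\<sigma> x))"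
    using assms(1) by (simp add: path_system_def)
  moreover have "0 \<le> \<epsilon> * (real (card V) * d)"
    using assms(6,7) by (simp add: average_degree_def)
  ultimately show False by linarith
qed

theorem proposition5p1:
  fixes V :: "'a set" and E :: "'a set set" and R :: "('a set \<times> 'a set) set"
    and d \<epsilon> :: real
  assumes "edge_ordered_graph V E R"
    and "V \<noteq> {}"
    and "d = average_degree V E"
    and "0 < \<epsilon>" and "\<epsilon> < 1"
    and "\<forall>S. S \<subseteq> V \<and> real (card S) \<le> \<epsilon> * d \<longrightarrow>
           real (card (induced_edges E S)) \<le> (1/2 - \<epsilon>) * d"
  shows "\<exists>xs. monotone_path V E R xs \<and> real (path_length xs) \<ge> \<epsilon> * d"
proof -
  have V: "finite V" and edges: "\<forall>e\<in>E. e \<subseteq> V \<and> card e = 2"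
    and R: "trans R" "total_on E R"
    using assms(1) by (auto simp: edge_ordered_graph_def simple_graph_def strict_linear_order_on_def)
  have E: "finite E" using V edges by (intro finite_subset[of E "Pow V"]) auto
  obtain \<sigma> where \<sigma>: "path_system V E R \<sigma>" using path_system_exists[OF V E edges R] by blast
  then obtain x where "x \<in> V" "\<epsilon> * d \<le> real (path_length (\<sigma> x))"
    using path_system_has_long_path[OF \<sigma> V assms(2) _ E assms(3,4,6)] edges by blast
  moreover have "monotone_path V E R (\<sigma> x)"
    using \<sigma> \<open>x \<in> V\<close> by (simp add: path_system_def increasing_path_to_def monotone_path_def)
  ultimately show ?thesis by blast
qed

end
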